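(* Let $\mathcal{C}$ be a closed assembler and $\mathcal{D}$ a subassembler which is a sieve in $\mathcal{C}$, and suppose that $\mathcal{C}$ has complements for all objects of $\mathcal{D}$. Let $\{f_i:A_i\to B\}_{i\in I}$ be a finite collection of morphisms in $\mathcal{C}$ such that $A_i\times_BA_{i'}\in\mathcal{D}$ for all $i\neq i'$. Then there exists a morphism $g:\{Z_k\}_{k\in K}\to\{A_i\}_{i\in I}$ in $\mathcal{W}(\mathcal{C})$ such that for all $k\neq k'$ in $K$ the morphisms $f_{g(k)}g_k$ and $f_{g(k')}g_{k'}$ are either equal or disjoint, and if they are equal then $g(k)\neq g(k')$.
   Context: An assembler is a small category with a Grothendieck topology satisfying: (I) there is an initial object $\varnothing$ covered by the empty family; (R) any two finite disjoint covering families of an object have a common refinement which is a finite disjoint covering family; (M) all morphisms are monomorphisms. Maps $A\to C$, $B\to C$ are disjoint if $A\times_CB$ exists and is initial. An assembler is closed if it has all pullbacks. A subassembler is a subcategory which is an assembler and whose inclusion is continuous and preserves the initial object and disjointness. A sieve is a full subcategory $\mathcal{D}$ such that whenever $A\to B$ is a morphism with $B\in\mathcal{D}$ then $A\in\mathcal{D}$. $\mathcal{C}$ has complements for $A$ if every morphism $A\to B$ belongs to a finite disjoint covering family of $B$. $\mathcal{W}(\mathcal{C})$ is the category whose objects are finite families $\{A_i\}_{i\in I}$ of noninitial objects, and whose morphisms $\{Z_k\}_{k\in K}\to\{A_i\}_{i\in I}$ are a map $g:K\to I$ with morphisms $g_k:Z_k\to A_{g(k)}$ such that for each $i$, $\{g_k\}_{k\in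 g^{-1}(i)}$ is a finite disjoint covering family of $A_i$. *)

theory Defs
  imports Main
begin

text \<open>A small category: a set of objects, a set of morphisms, domain/codomain,
identities and composition (Comp g f is g after f).\<close>

record ('o, 'm) cat =
  Ob :: "'o set"
  Mor :: "'m set"
  Dom :: "'m \<Rightarrow> 'o"
  Cod :: "'m \<Rightarrow> 'o"
  Id :: "'o \<Rightarrow> 'm"
  Comp :: "'m \<Rightarrow> 'm \<Rightarrow> 'm"

definition hom :: "('o, 'm) cat \<Rightarrow> 'o \<Rightarrow> 'o \<Rightarrow> 'm set" where
  "hom C X Y = {f \<in> Mor C. Dom C f = X \<and> Cod C f = Y}"

definition is_category :: "('o, 'm) cat \<Rightarrow> bool" where
  "is_category C \<longleftrightarrow>
     (\<forall>f \<in> Mor C. Dom C f \<in> Ob C \<and> Cod C f \<in> Ob C) \<and>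
     (\<forall>X \<in> Ob C. Id C X \<in> hom C X X) \<and>
     (\<forall>f \<in> Mor C. \<forall>g \<in> Mor C. Cod C f = Dom C g \<longrightarrow>
         Comp C g f \<in> hom C (Dom C f) (Cod C g)) \<and>
     (\<forall>f \<in> Mor C. Comp C f (Id C (Dom C f)) = f \<and> Comp C (Id C (Cod C f)) f = f) \<and>
     (\<forall>f \<in> Mor C. \<forall>g \<in> Mor C. \<forall>h \<in> Mor C. Cod C f = Dom C g \<longrightarrow> Cod C g = Dom C h \<longrightarrow>
         Comp C h (Comp C g f) = Comp C (Comp C h g) f)"

definition is_mono :: "('o, 'm) cat \<Rightarrow> 'm \<Rightarrow> bool" where
  "is_mono C f \<longleftrightarrow> (\<forall>g \<in> Mor C. \<forall>h \<in> Mor C.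
      Cod C g = Dom C f \<longrightarrow> Cod C h = Dom C f \<longrightarrow> Dom C g = Dom C h \<longrightarrow>
      Comp C f g = Comp C f h \<longrightarrow> g = h)"

definition initial :: "('o, 'm) cat \<Rightarrow> 'o \<Rightarrow> bool" where
  "initial C X \<longleftrightarrow> X \<in> Ob C \<and> (\<forall>Y \<in> Ob C. \<exists>!f. f \<in> hom C X Y)"

definition is_pullback :: "('o, 'm) cat \<Rightarrow> 'm \<Rightarrow> 'm \<Rightarrow> 'o \<Rightarrow> 'm \<Rightarrow> 'm \<Rightarrow> bool" where
  "is_pullback C f g P p q \<longleftrightarrow>
     f \<in> Mor C \<and> g \<in> Mor C \<and> Cod C f = Cod C g \<and> P \<in> Ob C \<and>
     p \<in> hom C P (Dom C f) \<and> q \<in> hom C P (Dom C g) \<and>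
     Comp C f p = Comp C g q \<and>
     (\<forall>W r s. r \<in> hom C W (Dom C f) \<longrightarrow> s \<in> hom C W (Dom C g) \<longrightarrow>
        Comp C f r = Comp C g s \<longrightarrow>
        (\<exists>!u. u \<in> hom C W P \<and> Comp C p u = r \<and> Comp C q u = s))"

definition disjoint :: "('o, 'm) cat \<Rightarrow> 'm \<Rightarrow> 'm \<Rightarrow> bool" where
  "disjoint C f g \<longleftrightarrow> (\<exists>P p q. is_pullback C f g P p q \<and> initial C P)"

definition closed_cat :: "('o, 'm) cat \<Rightarrow> bool" where
  "closed_cat C \<longleftrightarrow> (\<forall>f \<in> Mor C. \<forall>g \<in> Mor C. Cod C f = Cod C g \<longrightarrow>
      (\<exists>P p q. is_pullback C f g P p q))"

definition sieve_on :: "('o, 'm) cat \<Rightarrow> 'o \<Rightarrow> 'm set \<Rightarrow> bool" where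
  "sieve_on C B S \<longleftrightarrow> S \<subseteq> Mor C \<and> (\<forall>f \<in> S. Cod C f = B) \<and>
     (\<forall>f \<in> S. \<forall>h \<in> Mor C. Cod C h = Dom C f \<longrightarrow> Comp C f h \<in> S)"

definition max_sieve :: "('o, 'm) cat \<Rightarrow> 'o \<Rightarrow> 'm set" where
  "max_sieve C B = {f \<in> Mor C. Cod C f = B}"

definition pullback_sieve :: "('o, 'm) cat \<Rightarrow> 'm \<Rightarrow> 'm set \<Rightarrow> 'm set" where
  "pullback_sieve C h S = {g \<in> Mor C. Cod C g = Dom C h \<and> Comp C h g \<in> S}"

definition grothendieck_topology :: "('o, 'm) cat \<Rightarrow> ('o \<Rightarrow> 'm set set) \<Rightarrow> bool" where
  "grothendieck_topology C J \<longleftrightarrow>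
     (\<forall>B \<in> Ob C. \<forall>S \<in> J B. sieve_on C B S) \<and>
     (\<forall>B \<in> Ob C. max_sieve C B \<in> J B) \<and>
     (\<forall>B \<in> Ob C. \<forall>S \<in> J B. \<forall>h \<in> Mor C. Cod C h = B \<longrightarrow> pullback_sieve C h S \<in> J (Dom C h)) \<and>
     (\<forall>B \<in> Ob C. \<forall>S \<in> J B. \<forall>R. sieve_on C B R \<longrightarrow>
        (\<forall>f \<in> S. pullback_sieve C f R \<in> J (Dom C f)) \<longrightarrow> R \<in> J B)"

definition gen_sieve :: "('o, 'm) cat \<Rightarrow> 'm set \<Rightarrow> 'm set" where
  "gen_sieve C F = {Comp C f h | f h. f \<in> F \<and> h \<in> Mor C \<and> Cod C h = Dom C f}"

definition covering_family :: "('o, 'm) cat \<Rightarrow> ('o \<Rightarrow> 'm set set) \<Rightarrow> 'o \<Rightarrow> 'i set \<Rightarrow> ('i \<Rightarrow> 'm) \<Rightarrow> bool" where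
  "covering_family C J B I f \<longleftrightarrow>
     (\<forall>i \<in> I. f i \<in> Mor C \<and> Cod C (f i) = B) \<and> gen_sieve C (f ` I) \<in> J B"

definition fdcf :: "('o, 'm) cat \<Rightarrow> ('o \<Rightarrow> 'm set set) \<Rightarrow> 'o \<Rightarrow> 'i set \<Rightarrow> ('i \<Rightarrow> 'm) \<Rightarrow> bool" where
  "fdcf C J B I f \<longleftrightarrow> finite I \<and> covering_family C J B I f \<and>
     (\<forall>i \<in> I. \<forall>j \<in> I. i \<noteq> j \<longrightarrow> disjoint C (f i) (f j))"

definition refines :: "('o, 'm) cat \<Rightarrow> 'k set \<Rightarrow> ('k \<Rightarrow> 'm) \<Rightarrow> 'i set \<Rightarrow> ('i \<Rightarrow> 'm) \<Rightarrow> bool" where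
  "refines C K h I f \<longleftrightarrow> (\<forall>k \<in> K. \<exists>i \<in> I. \<exists>u \<in> Mor C.
      Cod C u = Dom C (f i) \<and> h k = Comp C (f i) u)"

definition assembler :: "('o, 'm) cat \<Rightarrow> ('o \<Rightarrow> 'm set set) \<Rightarrow> bool" where
  "assembler C J \<longleftrightarrow> is_category C \<and> grothendieck_topology C J \<and>
     \<comment> \<open>(I)\<close>
     (\<exists>E. initial C E \<and> covering_family C J E ({} :: nat set) (\<lambda>_. undefined)) \<and>
     \<comment> \<open>(R)\<close>
     (\<forall>B \<in> Ob C. \<forall>(I1 :: nat set) f1 (I2 :: nat set) f2.
        fdcf C J B I1 f1 \<longrightarrow> fdcf C J B I2 f2 \<longrightarrow>
        (\<exists>(K :: nat set) h. fdcf C J B K h \<and> refines C K h I1 f1 \<and> refines C K h I2 f2)) \<and>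
     \<comment> \<open>(M)\<close>
     (\<forall>f \<in> Mor C. is_mono C f)"

definition closed_assembler :: "('o, 'm) cat \<Rightarrow> ('o \<Rightarrow> 'm set set) \<Rightarrow> bool" where
  "closed_assembler C J \<longleftrightarrow> assembler C J \<and> closed_cat C"

definition full_sub :: "('o, 'm) cat \<Rightarrow> 'o set \<Rightarrow> ('o, 'm) cat" where
  "full_sub C D = C\<lparr> Ob := D, Mor := {f \<in> Mor C. Dom C f \<in> D \<and> Cod C f \<in> D} \<rparr>"

definition is_sieve :: "('o, 'm) cat \<Rightarrow> 'o set \<Rightarrow> bool" where
  "is_sieve C D \<longleftrightarrow> D \<subseteq> Ob C \<and> (\<forall>h \<in> Mor C. Cod C h \<in> D \<longrightarrow> Dom C h \<in> D)"

definition subassembler :: "('o, 'm) cat \<Rightarrow> ('o \<Rightarrow> 'm set set) \<Rightarrow> 'o set \<Rightarrow> ('o \<Rightarrow> 'm set set) \<Rightarrow> bool" where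
  "subassembler C J D JD \<longleftrightarrow> D \<subseteq> Ob C \<and> assembler (full_sub C D) JD \<and>
     (\<forall>B \<in> D. \<forall>F. F \<subseteq> Mor (full_sub C D) \<longrightarrow> (\<forall>f \<in> F. Cod C f = B) \<longrightarrow>
        gen_sieve (full_sub C D) F \<in> JD B \<longrightarrow> gen_sieve C F \<in> J B) \<and>
     (\<forall>X. initial (full_sub C D) X \<longrightarrow> initial C X) \<and>
     (\<forall>f \<in> Mor (full_sub C D). \<forall>g \<in> Mor (full_sub C D).
        disjoint (full_sub C D) f g \<longrightarrow> disjoint C f g)"

definition has_complements_for :: "('o, 'm) cat \<Rightarrow> ('o \<Rightarrow> 'm set set) \<Rightarrow> 'o \<Rightarrow> bool" where
  "has_complements_for C J A \<longleftrightarrow> (\<forall>f \<in> Mor C. Dom C f = A \<longrightarrow>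
      (\<exists>(I :: nat set) h. fdcf C J (Cod C f) I h \<and> (\<exists>i \<in> I. h i = f)))"

definition W_obj :: "('o, 'm) cat \<Rightarrow> 'i set \<Rightarrow> ('i \<Rightarrow> 'o) \<Rightarrow> bool" where
  "W_obj C I A \<longleftrightarrow> finite I \<and> (\<forall>i \<in> I. A i \<in> Ob C \<and> \<not> initial C (A i))"

text \<open>A morphism \<open>{Z_k}_{k\<in>K} \<rightarrow> {A_i}_{i\<in>I}\<close> in W(C), given by g : K \<rightarrow> I and gm k : Z k \<rightarrow> A (g k).\<close>

definition W_hom :: "('o, 'm) cat \<Rightarrow> ('o \<Rightarrow> 'm set set) \<Rightarrow> 'k set \<Rightarrow> ('k \<Rightarrow> 'o) \<Rightarrow>
    'i set \<Rightarrow> ('i \<Rightarrow> 'o) \<Rightarrow> ('k \<Rightarrow> 'i) \<Rightarrow> ('k \<Rightarrow> 'm) \<Rightarrow> bool" where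
  "W_hom C J K Z I A g gm \<longleftrightarrow> W_obj C K Z \<and> W_obj C I A \<and>
     (\<forall>k \<in> K. g k \<in> I \<and> gm k \<in> hom C (Z k) (A (g k))) \<and>
     (\<forall>i \<in> I. fdcf C J (A i) {k \<in> K. g k = i} gm)"

end

theory Submission
  imports Defs
begin

text \<open>Induct on the index set, maintaining a finite family S of pairwise disjoint, non-initial
  subobjects of B, each contained in some \<open>A i\<close>, whose restrictions cover every \<open>A i\<close> treated so
  far. To add \<open>A j\<close>, pull each \<open>s \<in> S\<close> back along \<open>f j\<close>: the pullback maps into some
  \<open>A i \<times>\<^sub>B A j \<in> D\<close>, so it lies in the sieve D and has complements, both in the domain of s and
  in \<open>A j\<close>. Cutting each s along such a complement decomposition, and adding those pieces of a
  common refinement of the decompositions of \<open>A j\<close> that miss every pullback, keeps the invariant;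
  pieces with initial domain are discarded, which is harmless for covering since initial objects
  are covered by the empty sieve. At the end the pairs \<open>(i, u)\<close> with \<open>f i \<circ> u \<in> S\<close> index the
  required morphism of \<open>W(C)\<close>: distinct members of S are disjoint, and since \<open>f i\<close> is monic, a
  composite occurs at most once for each index.\<close>

lemma bij_betw_Sigma_fibre:
  assumes e: "bij_betw e K (SIGMA i:I. U i)" and i: "i \<in> I"
  shows "bij_betw (\<lambda>k. snd (e k)) {k \<in> K. fst (e k) = i} (U i)"
  unfolding bij_betw_def
proof
  show "inj_on (\<lambda>k. snd (e k)) {k \<in> K. fst (e k) = i}"
    using bij_betw_imp_inj_on[OF e] unfolding inj_on_def by (simp add: prod_eq_iff)
  have "(\<lambda>k. snd (e k)) ` {k \<in> K. fst (e k) = i} = {u. (i, u) \<in> e ` K}"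
    by (force simp: image_iff prod_eq_iff)
  then show "(\<lambda>k. snd (e k)) ` {k \<in> K. fst (e k) = i} = U i"
    using bij_betw_imp_surj_on[OF e] i by simp
qed

section \<open>Categories, monomorphisms and disjointness\<close>

locale category =
  fixes C :: "('o, 'm) cat"
  assumes is_category: "is_category C"
begin

lemma in_homI: "f \<in> Mor C \<Longrightarrow> f \<in> hom C (Dom C f) (Cod C f)"
  unfolding hom_def by blast

lemma in_homD:
  assumes "f \<in> hom C X Y" shows "f \<in> Mor C" "Dom C f = X" "Cod C f = Y"
  using assms unfolding hom_def by blast+

lemma in_hom_obs:
  assumes "f \<in> hom C X Y" shows "X \<in> Ob C" "Y \<in> Ob C"
  using assms is_category unfolding is_category_def hom_def by blast+

lemma id_in_hom: "X \<in> Ob C \<Longrightarrow> Id C X \<in> hom C X X"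
  using is_category unfolding is_category_def by blast

lemma comp_in_hom:
  assumes x: "x \<in> hom C X Y" and y: "y \<in> hom C Y Z" shows "Comp C y x \<in> hom C X Z"
proof -
  have "\<forall>f \<in> Mor C. \<forall>g \<in> Mor C. Cod C f = Dom C g \<longrightarrow> Comp C g f \<in> hom C (Dom C f) (Cod C g)"
    using is_category unfolding is_category_def by blast
  then show ?thesis using in_homD[OF x] in_homD[OF y] by metis
qed

lemma comp_assoc:
  assumes "x \<in> hom C W X" and "y \<in> hom C X Y" and "z \<in> hom C Y Z"
  shows "Comp C z (Comp C y x) = Comp C (Comp C z y) x"
proof -
  have "\<forall>f \<in> Mor C. \<forall>g \<in> Mor C. \<forall>h \<in> Mor C. Cod C f = Dom C g \<longrightarrow> Cod C g = Dom C h \<longrightarrow>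
      Comp C h (Comp C g f) = Comp C (Comp C h g) f"
    using is_category unfolding is_category_def by blast
  then show ?thesis using in_homD[OF assms(1)] in_homD[OF assms(2)] in_homD[OF assms(3)] by metis
qed

lemma comp_id_right: "f \<in> hom C X Y \<Longrightarrow> Comp C f (Id C X) = f"
  using is_category unfolding is_category_def hom_def by blast

lemma comp_id_left: "f \<in> hom C X Y \<Longrightarrow> Comp C (Id C Y) f = f"
  using is_category unfolding is_category_def hom_def by blast

lemma initial_hom_unique:
  assumes "initial C E" and "a \<in> hom C E Y" and "b \<in> hom C E Y" shows "a = b"
  using assms in_hom_obs(2) unfolding initial_def by blast

lemma initial_hom_exists:
  assumes "initial C E" and "Y \<in> Ob C" obtains a where "a \<in> hom C E Y"
  using assms unfolding initial_def by blast

end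

lemma is_pullbackD:
  assumes "is_pullback C a b P p q"
  shows "p \<in> hom C P (Dom C a)" "q \<in> hom C P (Dom C b)" "Comp C a p = Comp C b q"
  using assms unfolding is_pullback_def by blast+

lemma is_pullback_lift:
  assumes "is_pullback C a b P p q" and "x \<in> hom C W (Dom C a)" and "y \<in> hom C W (Dom C b)"
    and "Comp C a x = Comp C b y"
  obtains u where "u \<in> hom C W P" "Comp C p u = x" "Comp C q u = y"
  using assms unfolding is_pullback_def by blast

lemma (in category) pullback_comp_in_sieve:
  assumes D: "is_sieve C D" and P: "is_pullback C a b P p p'" "P \<in> D"
    and Q: "is_pullback C (Comp C a u) b Q q r" and u: "u \<in> hom C W (Dom C a)"
  shows "Q \<in> D"
proof -
  have a: "a \<in> hom C (Dom C a) (Cod C a)" using P(1) in_homI unfolding is_pullback_def by blast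
  have q: "q \<in> hom C Q W"
    using is_pullbackD(1)[OF Q] in_homD(2)[OF comp_in_hom[OF u a]] by simp
  have "Comp C a (Comp C u q) = Comp C b r"
    using comp_assoc[OF q u a] is_pullbackD(3)[OF Q] by simp
  then obtain v where "v \<in> hom C Q P"
    using is_pullback_lift[OF P(1) comp_in_hom[OF q u] is_pullbackD(2)[OF Q]] by blast
  then show ?thesis using D P(2) unfolding is_sieve_def hom_def by blast
qed

locale mono_category = category +
  assumes mono: "f \<in> Mor C \<Longrightarrow> is_mono C f"
begin

lemma mono_cancel:
  assumes s: "s \<in> Mor C" and g: "g \<in> hom C X (Dom C s)" and h: "h \<in> hom C X' (Dom C s)"
    and eq: "Comp C s g = Comp C s h"
  shows "g = h"
proof -
  have "X = Dom C (Comp C s g)" "X' = Dom C (Comp C s h)"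
    using in_homD(2) comp_in_hom[OF g in_homI[OF s]] comp_in_hom[OF h in_homI[OF s]] by blast+
  then have "Dom C g = Dom C h" using eq in_homD(2)[OF g] in_homD(2)[OF h] by simp
  then show ?thesis
    using mono[OF s] in_homD[OF g] in_homD[OF h] eq unfolding is_mono_def by simp
qed

text \<open>A morphism into an initial object is split by the unique arrow out of it, and
  monicity makes the splitting an inverse.\<close>

lemma initial_if_hom_into_initial:
  assumes E: "initial C E" and m: "m \<in> hom C X E"
  shows "initial C X"
proof -
  have X: "X \<in> Ob C" and E_ob: "E \<in> Ob C" using in_hom_obs[OF m] by blast+
  obtain i where i: "i \<in> hom C E X" using initial_hom_exists[OF E X] .
  have "Comp C m i = Id C E"
    using initial_hom_unique[OF E comp_in_hom[OF i m] id_in_hom[OF E_ob]] .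
  then have "Comp C m (Comp C i m) = Comp C m (Id C X)"
    using comp_assoc[OF m i m] comp_id_left[OF m] comp_id_right[OF m] by simp
  moreover have "Comp C i m \<in> hom C X (Dom C m)" "Id C X \<in> hom C X (Dom C m)"
    using comp_in_hom[OF m i] id_in_hom[OF X] in_homD(2)[OF m] by simp_all
  ultimately have im: "Comp C i m = Id C X"
    using mono_cancel[OF in_homD(1)[OF m]] by blast
  show ?thesis
    unfolding initial_def
  proof (intro conjI ballI)
    fix Y assume Y: "Y \<in> Ob C"
    obtain t where t: "t \<in> hom C E Y" using initial_hom_exists[OF E Y] .
    have factor: "a = Comp C (Comp C a i) m" if a: "a \<in> hom C X Y" for a
      using comp_assoc[OF m i a] im comp_id_right[OF a] by simp
    have "a = b" if a: "a \<in> hom C X Y" and b: "b \<in> hom C X Y" for a b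
      using factor[OF a] factor[OF b] initial_hom_unique[OF E comp_in_hom[OF i a] comp_in_hom[OF i b]]
      by argo
    then show "\<exists>!a. a \<in> hom C X Y" using comp_in_hom[OF m t] by blast
  qed (rule X)
qed

lemma disjoint_morD:
  assumes "disjoint C a b" shows "a \<in> Mor C" "b \<in> Mor C" "Cod C a = Cod C b"
  using assms unfolding disjoint_def is_pullback_def by blast+

lemma disjoint_cone_initial:
  assumes d: "disjoint C a b" and x: "x \<in> hom C X (Dom C a)" and y: "y \<in> hom C X (Dom C b)"
    and eq: "Comp C a x = Comp C b y"
  shows "initial C X"
proof -
  obtain P p q where P: "is_pullback C a b P p q" "initial C P"
    using d unfolding disjoint_def by blast
  then obtain u where "u \<in> hom C X P"
    using x y eq unfolding is_pullback_def by blast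
  then show ?thesis using initial_if_hom_into_initial[OF P(2)] by blast
qed

end

locale closed_mono_category = mono_category +
  assumes closed: "closed_cat C"
begin

lemma pullback_exists:
  assumes "a \<in> Mor C" and "b \<in> Mor C" and "Cod C a = Cod C b"
  obtains P p q where "is_pullback C a b P p q"
  using closed assms unfolding closed_cat_def by blast

lemma pullback_choice:
  assumes "\<And>s. s \<in> S \<Longrightarrow> s \<in> hom C (Dom C s) (Cod C b)" and b: "b \<in> Mor C"
  obtains Q q r where "\<And>s. s \<in> S \<Longrightarrow> is_pullback C s b (Q s) (q s) (r s)"
proof -
  have "\<exists>t. is_pullback C s b (fst t) (fst (snd t)) (snd (snd t))" if s: "s \<in> S" for s
  proof -
    obtain P p p' where "is_pullback C s b P p p'"
      using pullback_exists[OF in_homD(1)[OF assms(1)[OF s]] b] in_homD(3)[OF assms(1)[OF s]] .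
    then show ?thesis by (intro exI[of _ "(P, p, p')"]) simp
  qed
  then have ex: "\<forall>s \<in> S. \<exists>t. is_pullback C s b (fst t) (fst (snd t)) (snd (snd t))" by blast
  obtain t where "\<forall>s \<in> S. is_pullback C s b (fst (t s)) (fst (snd (t s))) (snd (snd (t s)))"
    using bchoice[OF ex] by blast
  then show ?thesis
    using that[of "\<lambda>s. fst (t s)" "\<lambda>s. fst (snd (t s))" "\<lambda>s. snd (snd (t s))"] by blast
qed

lemma disjointI:
  assumes a: "a \<in> Mor C" and b: "b \<in> Mor C" and ab: "Cod C a = Cod C b"
    and cone: "\<And>X x y. x \<in> hom C X (Dom C a) \<Longrightarrow> y \<in> hom C X (Dom C b) \<Longrightarrow>
      Comp C a x = Comp C b y \<Longrightarrow> initial C X"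
  shows "disjoint C a b"
proof -
  obtain P p q where P: "is_pullback C a b P p q" using pullback_exists[OF a b ab] .
  then have "initial C P" using cone unfolding is_pullback_def by blast
  then show ?thesis using P unfolding disjoint_def by blast
qed

lemma disjoint_sym:
  assumes d: "disjoint C a b" shows "disjoint C b a"
proof (rule disjointI)
  fix X x y assume "x \<in> hom C X (Dom C b)" "y \<in> hom C X (Dom C a)" "Comp C b x = Comp C a y"
  then show "initial C X" using disjoint_cone_initial[OF d] by metis
qed (use disjoint_morD[OF d] in auto)

lemma disjoint_comp_right:
  assumes d: "disjoint C a b" and c: "c \<in> hom C W (Dom C a)" and e: "e \<in> hom C W' (Dom C b)"
  shows "disjoint C (Comp C a c) (Comp C b e)"
proof -
  have a: "a \<in> hom C (Dom C a) (Cod C a)" and b: "b \<in> hom C (Dom C b) (Cod C a)"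
    using in_homI disjoint_morD[OF d] by metis+
  have ac: "Comp C a c \<in> hom C W (Cod C a)" and be: "Comp C b e \<in> hom C W' (Cod C a)"
    using comp_in_hom a b c e by blast+
  show ?thesis
  proof (rule disjointI)
    fix X x y assume x: "x \<in> hom C X (Dom C (Comp C a c))" and y: "y \<in> hom C X (Dom C (Comp C b e))"
      and eq: "Comp C (Comp C a c) x = Comp C (Comp C b e) y"
    have x': "x \<in> hom C X W" and y': "y \<in> hom C X W'" using x y in_homD(2)[OF ac] in_homD(2)[OF be] by simp_all
    have "Comp C a (Comp C c x) = Comp C b (Comp C e y)"
      using eq comp_assoc[OF x' c a] comp_assoc[OF y' e b] by simp
    then show "initial C X"
      using disjoint_cone_initial[OF d comp_in_hom[OF x' c] comp_in_hom[OF y' e]] by blast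
  qed (simp_all add: in_homD[OF ac] in_homD[OF be])
qed

lemma disjoint_comp_left:
  assumes d: "disjoint C c c'" and s: "s \<in> Mor C" and cs: "Cod C c = Dom C s"
  shows "disjoint C (Comp C s c) (Comp C s c')"
proof -
  have c: "c \<in> hom C (Dom C c) (Dom C s)" and c': "c' \<in> hom C (Dom C c') (Dom C s)"
    using in_homI disjoint_morD[OF d] cs by metis+
  have s': "s \<in> hom C (Dom C s) (Cod C s)" using in_homI[OF s] .
  have sc: "Comp C s c \<in> hom C (Dom C c) (Cod C s)" and sc': "Comp C s c' \<in> hom C (Dom C c') (Cod C s)"
    using comp_in_hom s' c c' by blast+
  show ?thesis
  proof (rule disjointI)
    fix X x y assume x: "x \<in> hom C X (Dom C (Comp C s c))" and y: "y \<in> hom C X (Dom C (Comp C s c'))"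
      and eq: "Comp C (Comp C s c) x = Comp C (Comp C s c') y"
    have x': "x \<in> hom C X (Dom C c)" and y': "y \<in> hom C X (Dom C c')"
      using x y in_homD(2)[OF sc] in_homD(2)[OF sc'] by simp_all
    have "Comp C s (Comp C c x) = Comp C s (Comp C c' y)"
      using eq comp_assoc[OF x' c s'] comp_assoc[OF y' c' s'] by simp
    then have "Comp C c x = Comp C c' y"
      by (rule mono_cancel[OF s comp_in_hom[OF x' c] comp_in_hom[OF y' c']])
    then show "initial C X" using disjoint_cone_initial[OF d x' y'] by blast
  qed (simp_all add: in_homD[OF sc] in_homD[OF sc'])
qed

lemma disjoint_cancel_left:
  assumes d: "disjoint C (Comp C s u) (Comp C s u')" and s: "s \<in> Mor C"
    and u: "u \<in> hom C W (Dom C s)" and u': "u' \<in> hom C W' (Dom C s)"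
  shows "disjoint C u u'"
proof (rule disjointI)
  have s': "s \<in> hom C (Dom C s) (Cod C s)" using in_homI[OF s] .
  have su: "Comp C s u \<in> hom C W (Cod C s)" and su': "Comp C s u' \<in> hom C W' (Cod C s)"
    using comp_in_hom[OF u s'] comp_in_hom[OF u' s'] .
  fix X x y assume x: "x \<in> hom C X (Dom C u)" and y: "y \<in> hom C X (Dom C u')"
    and eq: "Comp C u x = Comp C u' y"
  have x': "x \<in> hom C X (Dom C (Comp C s u))" and y': "y \<in> hom C X (Dom C (Comp C s u'))"
    using x y by (simp_all only: in_homD(2)[OF u] in_homD(2)[OF u'] in_homD(2)[OF su] in_homD(2)[OF su'])
  have "x \<in> hom C X W" "y \<in> hom C X W'" using x y in_homD(2)[OF u] in_homD(2)[OF u'] by simp_all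
  then have "Comp C (Comp C s u) x = Comp C (Comp C s u') y"
    using eq comp_assoc[OF _ u s'] comp_assoc[OF _ u' s'] by metis
  then show "initial C X" by (rule disjoint_cone_initial[OF d x' y'])
next
  show "u \<in> Mor C" "u' \<in> Mor C" "Cod C u = Cod C u'"
    using in_homD[OF u] in_homD[OF u'] by simp_all
qed

end

section \<open>Sites and disjoint covers\<close>

locale site = category +
  fixes J :: "'o \<Rightarrow> 'm set set"
  assumes grothendieck: "grothendieck_topology C J"
begin

lemma cover_is_sieve: "X \<in> Ob C \<Longrightarrow> S \<in> J X \<Longrightarrow> sieve_on C X S"
proof -
  have "\<forall>X \<in> Ob C. \<forall>S \<in> J X. sieve_on C X S"
    using grothendieck unfolding grothendieck_topology_def by (elim conjE)
  then show "X \<in> Ob C \<Longrightarrow> S \<in> J X \<Longrightarrow> sieve_on C X S" by blast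
qed

lemma max_sieve_covers: "X \<in> Ob C \<Longrightarrow> max_sieve C X \<in> J X"
proof -
  have "\<forall>X \<in> Ob C. max_sieve C X \<in> J X"
    using grothendieck unfolding grothendieck_topology_def by (elim conjE)
  then show "X \<in> Ob C \<Longrightarrow> max_sieve C X \<in> J X" by blast
qed

lemma pullback_sieve_covers:
  assumes "X \<in> Ob C" and "S \<in> J X" and "h \<in> hom C Y X"
  shows "pullback_sieve C h S \<in> J Y"
proof -
  have "\<forall>X \<in> Ob C. \<forall>S \<in> J X. \<forall>h \<in> Mor C. Cod C h = X \<longrightarrow> pullback_sieve C h S \<in> J (Dom C h)"
    using grothendieck unfolding grothendieck_topology_def by (elim conjE)
  then show ?thesis using assms in_homD[OF assms(3)] by metis
qed

lemma covers_local:
  assumes "X \<in> Ob C" and "S \<in> J X" and "sieve_on C X R"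
    and "\<And>h. h \<in> S \<Longrightarrow> pullback_sieve C h R \<in> J (Dom C h)"
  shows "R \<in> J X"
proof -
  have "\<forall>X \<in> Ob C. \<forall>S \<in> J X. \<forall>R. sieve_on C X R \<longrightarrow>
      (\<forall>h \<in> S. pullback_sieve C h R \<in> J (Dom C h)) \<longrightarrow> R \<in> J X"
    using grothendieck unfolding grothendieck_topology_def by (elim conjE)
  then show ?thesis using assms by blast
qed

lemma sieve_on_closed:
  "sieve_on C X R \<Longrightarrow> h \<in> R \<Longrightarrow> k \<in> hom C W (Dom C h) \<Longrightarrow> Comp C h k \<in> R"
  unfolding sieve_on_def hom_def by blast

lemma sieve_on_in_hom: "sieve_on C X R \<Longrightarrow> h \<in> R \<Longrightarrow> h \<in> hom C (Dom C h) X"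
  unfolding sieve_on_def hom_def by blast

lemma pullback_sieve_iff:
  "g \<in> pullback_sieve C h R \<longleftrightarrow> g \<in> Mor C \<and> Cod C g = Dom C h \<and> Comp C h g \<in> R"
  unfolding pullback_sieve_def by simp

lemma sieve_onI:
  assumes "\<And>h. h \<in> R \<Longrightarrow> h \<in> hom C (Dom C h) X"
    and "\<And>h k. h \<in> R \<Longrightarrow> k \<in> hom C (Dom C k) (Dom C h) \<Longrightarrow> Comp C h k \<in> R"
  shows "sieve_on C X R"
  unfolding sieve_on_def using assms in_homD in_homI by (metis subsetI)

lemma pullback_sieve_is_sieve:
  assumes R: "sieve_on C X R" and h: "h \<in> hom C Y X"
  shows "sieve_on C Y (pullback_sieve C h R)"
proof (rule sieve_onI)
  have g_hom: "g \<in> hom C (Dom C g) Y" and hg: "Comp C h g \<in> R"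
    if "g \<in> pullback_sieve C h R" for g
    using that in_homD(2)[OF h] unfolding pullback_sieve_iff hom_def by auto
  then show "g \<in> hom C (Dom C g) Y" if "g \<in> pullback_sieve C h R" for g
    using that by blast
  fix g k assume g: "g \<in> pullback_sieve C h R" and k: "k \<in> hom C (Dom C k) (Dom C g)"
  have hgk: "Comp C h (Comp C g k) = Comp C (Comp C h g) k" using comp_assoc[OF k g_hom[OF g] h] .
  have "Dom C (Comp C h g) = Dom C g" using in_homD(2)[OF comp_in_hom[OF g_hom[OF g] h]] .
  then have "Comp C (Comp C h g) k \<in> R" using sieve_on_closed[OF R hg[OF g]] k by simp
  then show "Comp C g k \<in> pullback_sieve C h R"
    using hgk in_homD[OF comp_in_hom[OF k g_hom[OF g]]] in_homD(2)[OF h]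
    unfolding pullback_sieve_iff by simp
qed

lemma pullback_sieve_of_member:
  assumes R: "sieve_on C X R" and h: "h \<in> R"
  shows "pullback_sieve C h R = max_sieve C (Dom C h)"
  using sieve_on_closed[OF R h] unfolding pullback_sieve_def max_sieve_def hom_def by auto

lemma pullback_sieve_comp:
  assumes a: "a \<in> hom C Y X" and b: "b \<in> hom C Z Y"
  shows "pullback_sieve C (Comp C a b) R = pullback_sieve C b (pullback_sieve C a R)"
proof (rule set_eqI)
  fix g
  have dom_ab: "Dom C (Comp C a b) = Z" using in_homD(2)[OF comp_in_hom[OF b a]] .
  show "g \<in> pullback_sieve C (Comp C a b) R \<longleftrightarrow> g \<in> pullback_sieve C b (pullback_sieve C a R)"
  proof (cases "g \<in> hom C (Dom C g) Z")
    case True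
    then show ?thesis
      using comp_assoc[OF True b a] in_homD[OF True] in_homD[OF comp_in_hom[OF True b]]
        dom_ab in_homD(2)[OF a] in_homD(2)[OF b]
      unfolding pullback_sieve_iff by simp
  next
    case False
    then have "g \<in> Mor C \<longrightarrow> Cod C g \<noteq> Z" unfolding hom_def by simp
    then show ?thesis unfolding pullback_sieve_iff dom_ab in_homD(2)[OF b] by blast
  qed
qed

lemma cover_mono:
  assumes X: "X \<in> Ob C" and S: "S \<in> J X" and R: "sieve_on C X R" and sub: "S \<subseteq> R"
  shows "R \<in> J X"
proof (rule covers_local[OF X S R])
  fix h assume h: "h \<in> S"
  have "Dom C h \<in> Ob C" using in_hom_obs(1)[OF sieve_on_in_hom[OF cover_is_sieve[OF X S] h]] .
  moreover have "pullback_sieve C h R = max_sieve C (Dom C h)"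
    using h sub by (intro pullback_sieve_of_member[OF R]) blast
  ultimately show "pullback_sieve C h R \<in> J (Dom C h)" by (simp add: max_sieve_covers)
qed

lemma gen_sieveI: "f \<in> F \<Longrightarrow> h \<in> hom C W (Dom C f) \<Longrightarrow> Comp C f h \<in> gen_sieve C F"
  unfolding gen_sieve_def hom_def by blast

lemma gen_sieveE:
  assumes "x \<in> gen_sieve C F"
  obtains f h where "x = Comp C f h" "f \<in> F" "h \<in> hom C (Dom C h) (Dom C f)"
  using assms unfolding gen_sieve_def hom_def by blast

lemma gen_sieve_is_sieve:
  assumes F: "\<And>f. f \<in> F \<Longrightarrow> f \<in> hom C (Dom C f) X"
  shows "sieve_on C X (gen_sieve C F)"
proof -
  have in_hom: "x \<in> hom C (Dom C x) X" if x: "x \<in> gen_sieve C F" for x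
  proof -
    obtain f h where fh: "x = Comp C f h" "f \<in> F" "h \<in> hom C (Dom C h) (Dom C f)"
      using x by (rule gen_sieveE)
    have "Comp C f h \<in> hom C (Dom C h) X" using comp_in_hom[OF fh(3) F[OF fh(2)]] .
    then show ?thesis using fh(1) in_homD(2) by simp
  qed
  have closed: "Comp C x k \<in> gen_sieve C F"
    if x: "x \<in> gen_sieve C F" and k: "k \<in> hom C (Dom C k) (Dom C x)" for x k
  proof -
    obtain f h where fh: "x = Comp C f h" "f \<in> F" "h \<in> hom C (Dom C h) (Dom C f)"
      using x by (rule gen_sieveE)
    have "Dom C x = Dom C h" using in_homD(2)[OF comp_in_hom[OF fh(3) F[OF fh(2)]]] fh(1) by simp
    then have k': "k \<in> hom C (Dom C k) (Dom C h)" using k by simp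
    have "Comp C x k = Comp C f (Comp C h k)" using comp_assoc[OF k' fh(3) F[OF fh(2)]] fh(1) by simp
    then show ?thesis using gen_sieveI[OF fh(2) comp_in_hom[OF k' fh(3)]] by simp
  qed
  show ?thesis
    using in_hom closed by (rule sieve_onI)
qed

end

definition disjoint_cover :: "('o, 'm) cat \<Rightarrow> ('o \<Rightarrow> 'm set set) \<Rightarrow> 'o \<Rightarrow> 'm set \<Rightarrow> bool" where
  "disjoint_cover C J X U \<longleftrightarrow> finite U \<and> (\<forall>u \<in> U. u \<in> hom C (Dom C u) X) \<and>
     gen_sieve C U \<in> J X \<and> (\<forall>u \<in> U. \<forall>v \<in> U. u \<noteq> v \<longrightarrow> disjoint C u v)"

definition factors_through :: "('o, 'm) cat \<Rightarrow> 'm set \<Rightarrow> 'm set \<Rightarrow> bool" where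
  "factors_through C V F \<longleftrightarrow>
     (\<forall>v \<in> V. \<exists>m \<in> F. \<exists>u. u \<in> hom C (Dom C v) (Dom C m) \<and> v = Comp C m u)"

lemma disjoint_coverD:
  assumes "disjoint_cover C J X U"
  shows "finite U" "\<And>u. u \<in> U \<Longrightarrow> u \<in> hom C (Dom C u) X" "gen_sieve C U \<in> J X"
    "\<And>u v. u \<in> U \<Longrightarrow> v \<in> U \<Longrightarrow> u \<noteq> v \<Longrightarrow> disjoint C u v"
  using assms unfolding disjoint_cover_def by blast+

locale closed_assembler_cat =
  fixes C :: "('o, 'm) cat" and J :: "'o \<Rightarrow> 'm set set"
  assumes closed_assembler: "closed_assembler C J"

sublocale closed_assembler_cat \<subseteq> closed_mono_category C
  by unfold_locales
    (use closed_assembler in \<open>simp_all add: closed_assembler_def assembler_def\<close>)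

sublocale closed_assembler_cat \<subseteq> site C J
  by unfold_locales (use closed_assembler in \<open>simp add: closed_assembler_def assembler_def\<close>)

context closed_assembler_cat
begin

lemma empty_sieve_covers_initial:
  assumes Y: "initial C Y" shows "{} \<in> J Y"
proof -
  obtain E where E: "initial C E" and "covering_family C J E ({} :: nat set) (\<lambda>_. undefined)"
    using closed_assembler unfolding closed_assembler_def assembler_def by blast
  then have "{} \<in> J E" unfolding covering_family_def gen_sieve_def by simp
  moreover obtain h where h: "h \<in> hom C Y E"
    using initial_hom_exists[OF Y] E unfolding initial_def by blast
  ultimately have "pullback_sieve C h {} \<in> J Y"
    using pullback_sieve_covers E unfolding initial_def by blast
  then show ?thesis by (simp add: pullback_sieve_def)
qed

lemma covers_up_to_initial:
  assumes X: "X \<in> Ob C" and S: "S \<in> J X" and R: "sieve_on C X R"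
    and H: "\<And>h. h \<in> S \<Longrightarrow> h \<in> R \<or> initial C (Dom C h)"
  shows "R \<in> J X"
proof (rule covers_local[OF X S R])
  fix h assume h: "h \<in> S"
  have h_hom: "h \<in> hom C (Dom C h) X" using sieve_on_in_hom[OF cover_is_sieve[OF X S] h] .
  show "pullback_sieve C h R \<in> J (Dom C h)"
  proof (cases "h \<in> R")
    case True
    then show ?thesis
      using pullback_sieve_of_member[OF R] max_sieve_covers in_hom_obs(1)[OF h_hom] by simp
  next
    case False
    then have "initial C (Dom C h)" using H h by blast
    then show ?thesis
      using cover_mono[OF _ empty_sieve_covers_initial pullback_sieve_is_sieve[OF R h_hom]]
        in_hom_obs(1)[OF h_hom] by blast
  qed
qed

lemma disjoint_cover_image:
  assumes "fdcf C J X K h" shows "disjoint_cover C J X (h ` K)"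
  using assms unfolding fdcf_def covering_family_def disjoint_cover_def hom_def by auto

lemma fdcf_if_disjoint_cover:
  assumes U: "disjoint_cover C J X (h ` K)" and inj: "inj_on h K" and K: "finite K"
  shows "fdcf C J X K h"
  unfolding fdcf_def covering_family_def
proof (intro conjI ballI impI)
  fix k k' assume "k \<in> K" "k' \<in> K" "k \<noteq> k'"
  then show "disjoint C (h k) (h k')" using inj disjoint_coverD(4)[OF U] by (metis image_eqI inj_onD)
qed (use K disjoint_coverD(2,3)[OF U] in \<open>auto simp: hom_def\<close>)

lemma disjoint_cover_indexed:
  assumes U: "disjoint_cover C J X U"
  obtains K :: "nat set" and h where "fdcf C J X K h" "h ` K = U"
proof -
  obtain h where h: "bij_betw h {0..<card U} U"
    using ex_bij_betw_nat_finite[OF disjoint_coverD(1)[OF U]] by blast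
  then have "fdcf C J X {0..<card U} h"
    using U by (intro fdcf_if_disjoint_cover) (simp_all add: bij_betw_def)
  then show ?thesis using that h by (simp add: bij_betw_def)
qed

lemma factors_through_image:
  assumes "refines C K h I f" and "\<forall>i \<in> I. f i \<in> Mor C"
  shows "factors_through C (h ` K) (f ` I)"
  unfolding factors_through_def
proof
  fix v assume "v \<in> h ` K"
  then obtain i u where iu: "i \<in> I" "u \<in> Mor C" "Cod C u = Dom C (f i)" "v = Comp C (f i) u"
    using assms(1) unfolding refines_def by blast
  have u: "u \<in> hom C (Dom C u) (Dom C (f i))" using iu unfolding hom_def by simp
  have "Dom C v = Dom C u"
    using in_homD(2)[OF comp_in_hom[OF u in_homI]] assms(2) iu by simp
  then show "\<exists>m \<in> f ` I. \<exists>u. u \<in> hom C (Dom C v) (Dom C m) \<and> v = Comp C m u"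
    using iu u by auto
qed

lemma factors_through_trans:
  assumes VW: "factors_through C V W" and WF: "factors_through C W F" and F: "F \<subseteq> Mor C"
  shows "factors_through C V F"
  unfolding factors_through_def
proof
  fix v assume "v \<in> V"
  then obtain w u where w: "w \<in> W" "u \<in> hom C (Dom C v) (Dom C w)" "v = Comp C w u"
    using VW unfolding factors_through_def by blast
  then obtain m u' where m: "m \<in> F" "u' \<in> hom C (Dom C w) (Dom C m)" "w = Comp C m u'"
    using WF unfolding factors_through_def by blast
  have "v = Comp C m (Comp C u' u)"
    using comp_assoc[OF w(2) m(2) in_homI] F m w(3) by auto
  then show "\<exists>m \<in> F. \<exists>u. u \<in> hom C (Dom C v) (Dom C m) \<and> v = Comp C m u"
    using m(1) comp_in_hom[OF w(2) m(2)] by blast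
qed

lemma disjoint_cover_id: assumes X: "X \<in> Ob C" shows "disjoint_cover C J X {Id C X}"
proof -
  have i: "Id C X \<in> hom C X X" using id_in_hom[OF X] .
  have "g \<in> gen_sieve C {Id C X}" if g: "g \<in> max_sieve C X" for g
  proof -
    have gX: "g \<in> hom C (Dom C g) X" using g unfolding max_sieve_def hom_def by simp
    then have "Comp C (Id C X) g \<in> gen_sieve C {Id C X}"
      using gen_sieveI[OF singletonI] in_homD(2)[OF i] by simp
    then show ?thesis using comp_id_left[OF gX] by simp
  qed
  moreover have "sieve_on C X (gen_sieve C {Id C X})"
    by (rule gen_sieve_is_sieve) (use i in_homD(2)[OF i] in simp)
  ultimately have "gen_sieve C {Id C X} \<in> J X"
    using cover_mono[OF X max_sieve_covers[OF X]] by blast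
  then show ?thesis unfolding disjoint_cover_def using i in_homD(2)[OF i] by simp
qed

lemma common_refinement:
  assumes X: "X \<in> Ob C" and U1: "disjoint_cover C J X U1" and U2: "disjoint_cover C J X U2"
  obtains V where "disjoint_cover C J X V" "factors_through C V U1" "factors_through C V U2"
proof -
  obtain K1 :: "nat set" and h1 where h1: "fdcf C J X K1 h1" "h1 ` K1 = U1"
    using disjoint_cover_indexed[OF U1] .
  obtain K2 :: "nat set" and h2 where h2: "fdcf C J X K2 h2" "h2 ` K2 = U2"
    using disjoint_cover_indexed[OF U2] .
  have "\<forall>B \<in> Ob C. \<forall>(I1 :: nat set) f1 (I2 :: nat set) f2. fdcf C J B I1 f1 \<longrightarrow> fdcf C J B I2 f2 \<longrightarrow>
      (\<exists>(K :: nat set) h. fdcf C J B K h \<and> refines C K h I1 f1 \<and> refines C K h I2 f2)"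
    using closed_assembler unfolding closed_assembler_def assembler_def by (elim conjE)
  then obtain K :: "nat set" and h
    where h: "fdcf C J X K h" "refines C K h K1 h1" "refines C K h K2 h2"
    using X h1(1) h2(1) by blast
  have "\<forall>k \<in> K1. h1 k \<in> Mor C" "\<forall>k \<in> K2. h2 k \<in> Mor C"
    using h1(1) h2(1) unfolding fdcf_def covering_family_def by blast+
  then show ?thesis
    using that disjoint_cover_image[OF h(1)] factors_through_image h h1(2) h2(2) by metis
qed

lemma common_refinement_finite:
  assumes X: "X \<in> Ob C" and "finite \<U>" and "\<forall>U \<in> \<U>. disjoint_cover C J X U"
  shows "\<exists>V. disjoint_cover C J X V \<and> (\<forall>U \<in> \<U>. factors_through C V U)"
  using assms(2,3)
proof (induction \<U> rule: finite_induct)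
  case empty
  then show ?case using disjoint_cover_id[OF X] by blast
next
  case (insert U \<U>)
  then obtain V where V: "disjoint_cover C J X V" "\<forall>U' \<in> \<U>. factors_through C V U'" by blast
  obtain V' where V': "disjoint_cover C J X V'" "factors_through C V' V" "factors_through C V' U"
    using common_refinement[OF X V(1)] insert.prems by blast
  have "factors_through C V' U'" if "U' \<in> \<U>" for U'
    using factors_through_trans[OF V'(2)] V(2) that insert.prems disjoint_coverD(2) in_homD(1)
    by (metis insert_iff subsetI)
  then show ?case using V' by blast
qed

lemma complement_cover:
  assumes "has_complements_for C J X" and m: "m \<in> hom C X Y"
  obtains F where "disjoint_cover C J Y F" "m \<in> F"
proof -
  obtain K :: "nat set" and h where "fdcf C J Y K h" "m \<in> h ` K"
    using assms in_homD[OF m] unfolding has_complements_for_def by blast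
  then show ?thesis using that disjoint_cover_image by blast
qed

lemma factors_or_disjoint:
  assumes F: "disjoint_cover C J X F" and r: "r \<in> F" and VF: "factors_through C V F" and w: "w \<in> V"
  shows "(\<exists>y. y \<in> hom C (Dom C w) (Dom C r) \<and> w = Comp C r y) \<or> disjoint C w r"
proof -
  obtain m y where m: "m \<in> F" "y \<in> hom C (Dom C w) (Dom C m)" "w = Comp C m y"
    using VF w unfolding factors_through_def by blast
  show ?thesis
  proof (cases "m = r")
    case False
    then have "disjoint C (Comp C m y) (Comp C r (Id C (Dom C r)))"
      using disjoint_comp_right[OF disjoint_coverD(4)[OF F m(1) r] m(2)]
        id_in_hom in_hom_obs(1) disjoint_coverD(2)[OF F r] by blast
    then show ?thesis using m(3) comp_id_right[OF disjoint_coverD(2)[OF F r]] by simp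
  qed (use m in blast)
qed

lemma cover_factoring_or_disjoint:
  assumes X: "X \<in> Ob C" and S: "finite S"
    and F: "\<And>s. s \<in> S \<Longrightarrow> disjoint_cover C J X (F s)" and r: "\<And>s. s \<in> S \<Longrightarrow> r s \<in> F s"
  obtains V where "disjoint_cover C J X V"
    "\<And>w. w \<in> V \<Longrightarrow> (\<exists>s \<in> S. \<exists>y. y \<in> hom C (Dom C w) (Dom C (r s)) \<and> w = Comp C (r s) y) \<or>
      (\<forall>s \<in> S. disjoint C w (r s))"
proof -
  obtain V where V: "disjoint_cover C J X V" "\<forall>U \<in> F ` S. factors_through C V U"
    using common_refinement_finite[OF X finite_imageI[OF S]] F by blast
  have "(\<exists>s \<in> S. \<exists>y. y \<in> hom C (Dom C w) (Dom C (r s)) \<and> w = Comp C (r s) y) \<or>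
      (\<forall>s \<in> S. disjoint C w (r s))" if "w \<in> V" for w
    using factors_or_disjoint[OF F r _ that] V(2) by blast
  then show ?thesis using that V(1) by blast
qed

end

section \<open>Common disjoint refinements of a family of morphisms\<close>

locale morphism_family = closed_assembler_cat C J for C :: "('o, 'm) cat" and J +
  fixes I :: "'i set" and A :: "'i \<Rightarrow> 'o" and f :: "'i \<Rightarrow> 'm" and B :: 'o
  assumes f_in_hom: "i \<in> I \<Longrightarrow> f i \<in> hom C (A i) B"
begin

definition lifts :: "'i \<Rightarrow> 'm set \<Rightarrow> 'm set" where
  "lifts i S = {u. u \<in> hom C (Dom C u) (A i) \<and> Comp C (f i) u \<in> S}"

text \<open>The invariant of the induction over the index set.\<close>

definition joint_refinement :: "'i set \<Rightarrow> 'm set \<Rightarrow> bool" where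
  "joint_refinement I' S \<longleftrightarrow> finite S \<and>
     (\<forall>s \<in> S. s \<in> hom C (Dom C s) B \<and> \<not> initial C (Dom C s) \<and>
        (\<exists>i \<in> I'. \<exists>u. u \<in> hom C (Dom C s) (A i) \<and> s = Comp C (f i) u)) \<and>
     (\<forall>s \<in> S. \<forall>t \<in> S. s \<noteq> t \<longrightarrow> disjoint C s t) \<and>
     (\<forall>i \<in> I'. gen_sieve C (lifts i S) \<in> J (A i))"

lemma joint_refinementD:
  assumes "joint_refinement I' S"
  shows "finite S" "\<And>s. s \<in> S \<Longrightarrow> s \<in> hom C (Dom C s) B" "\<And>s. s \<in> S \<Longrightarrow> \<not> initial C (Dom C s)"
    "\<And>s. s \<in> S \<Longrightarrow> \<exists>i \<in> I'. \<exists>u. u \<in> hom C (Dom C s) (A i) \<and> s = Comp C (f i) u"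
    "\<And>s t. s \<in> S \<Longrightarrow> t \<in> S \<Longrightarrow> s \<noteq> t \<Longrightarrow> disjoint C s t"
    "\<And>i. i \<in> I' \<Longrightarrow> gen_sieve C (lifts i S) \<in> J (A i)"
  using assms unfolding joint_refinement_def by blast+

lemma joint_refinement_empty: "joint_refinement {} {}"
  unfolding joint_refinement_def by simp

lemma lifts_iff: "u \<in> lifts i S \<longleftrightarrow> u \<in> hom C (Dom C u) (A i) \<and> Comp C (f i) u \<in> S"
  unfolding lifts_def by simp

lemma lifts_inj:
  assumes i: "i \<in> I" and u: "u \<in> lifts i S" and v: "v \<in> lifts i S"
    and eq: "Comp C (f i) u = Comp C (f i) v"
  shows "u = v"
proof -
  have "u \<in> hom C (Dom C u) (Dom C (f i))" "v \<in> hom C (Dom C v) (Dom C (f i))"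
    using u v in_homD(2)[OF f_in_hom[OF i]] unfolding lifts_iff by simp_all
  then show ?thesis using mono_cancel[OF in_homD(1)[OF f_in_hom[OF i]] _ _ eq] by blast
qed

lemma lifts_disjoint_cover:
  assumes S: "joint_refinement I' S" and i: "i \<in> I'" and I': "I' \<subseteq> I"
  shows "disjoint_cover C J (A i) (lifts i S)"
  unfolding disjoint_cover_def
proof (intro conjI ballI impI)
  have fi: "f i \<in> hom C (A i) B" using f_in_hom i I' by blast
  have "inj_on (Comp C (f i)) (lifts i S)" using lifts_inj i I' unfolding inj_on_def by blast
  moreover have "Comp C (f i) ` lifts i S \<subseteq> S" unfolding lifts_def by blast
  ultimately show "finite (lifts i S)"
    using joint_refinementD(1)[OF S] finite_imageD finite_subset by blast
  show "gen_sieve C (lifts i S) \<in> J (A i)" using joint_refinementD(6)[OF S i] .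
  fix u v assume u: "u \<in> lifts i S" and v: "v \<in> lifts i S"
  then show "u \<in> hom C (Dom C u) (A i)" unfolding lifts_iff by blast
  assume "u \<noteq> v"
  then have "disjoint C (Comp C (f i) u) (Comp C (f i) v)"
    using lifts_inj[OF _ u v] i I' joint_refinementD(5)[OF S] u v unfolding lifts_iff by blast
  then show "disjoint C u v"
    using disjoint_cancel_left in_homD[OF fi] u v unfolding lifts_iff by metis
qed

end

text \<open>One step of the induction, adding the index \<open>j\<close>: every old member \<open>s\<close> is cut up along a
  disjoint cover \<open>Fq s\<close> of its domain containing its overlap \<open>q s\<close> with \<open>f j\<close>, and the members
  of a disjoint cover V of \<open>A j\<close> that miss all these overlaps are added.\<close>

locale refinement_extension = morphism_family C J I A f B
  for C :: "('o, 'm) cat" and J and I :: "'i set" and A f B +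
  fixes I' :: "'i set" and S :: "'m set" and j :: 'i
    and Q :: "'m \<Rightarrow> 'o" and q r :: "'m \<Rightarrow> 'm" and Fq :: "'m \<Rightarrow> 'm set" and V :: "'m set"
  assumes refinement: "joint_refinement I' S" and I'_subset: "I' \<subseteq> I" and j: "j \<in> I"
    and pullback: "s \<in> S \<Longrightarrow> is_pullback C s (f j) (Q s) (q s) (r s)"
    and Fq_cover: "s \<in> S \<Longrightarrow> disjoint_cover C J (Dom C s) (Fq s)"
    and q_in_Fq: "s \<in> S \<Longrightarrow> q s \<in> Fq s"
    and V_cover: "disjoint_cover C J (A j) V"
    and V_dichotomy: "w \<in> V \<Longrightarrow>
      (\<exists>s \<in> S. \<exists>y. y \<in> hom C (Dom C w) (Dom C (r s)) \<and> w = Comp C (r s) y) \<or>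
      (\<forall>s \<in> S. disjoint C w (r s))"
begin

definition old_part :: "'m set" where
  "old_part = {Comp C s c | s c. s \<in> S \<and> c \<in> Fq s \<and> \<not> initial C (Dom C c)}"

definition new_part :: "'m set" where
  "new_part = {Comp C (f j) w | w. w \<in> V \<and> (\<forall>s \<in> S. disjoint C w (r s)) \<and> \<not> initial C (Dom C w)}"

definition extension :: "'m set" where
  "extension = old_part \<union> new_part"

lemma fj_hom: "f j \<in> hom C (A j) B"
  using f_in_hom[OF j] .

lemma S_hom: "s \<in> S \<Longrightarrow> s \<in> hom C (Dom C s) B"
  using joint_refinementD(2)[OF refinement] .

lemma q_hom: "s \<in> S \<Longrightarrow> q s \<in> hom C (Q s) (Dom C s)"
  using is_pullbackD(1)[OF pullback] .

lemma r_hom: "s \<in> S \<Longrightarrow> r s \<in> hom C (Q s) (A j)"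
  using is_pullbackD(2)[OF pullback] in_homD(2)[OF fj_hom] by metis

lemma pullback_square: "s \<in> S \<Longrightarrow> Comp C s (q s) = Comp C (f j) (r s)"
  using is_pullbackD(3)[OF pullback] .

lemma Fq_hom: "s \<in> S \<Longrightarrow> c \<in> Fq s \<Longrightarrow> c \<in> hom C (Dom C c) (Dom C s)"
  using disjoint_coverD(2)[OF Fq_cover] .

lemma V_hom: "w \<in> V \<Longrightarrow> w \<in> hom C (Dom C w) (A j)"
  using disjoint_coverD(2)[OF V_cover] .

lemma finite_extension: "finite extension"
proof -
  have "old_part \<subseteq> (\<lambda>(s, c). Comp C s c) ` (SIGMA s:S. Fq s)"
    unfolding old_part_def by auto
  moreover have "finite (SIGMA s:S. Fq s)"
    using joint_refinementD(1)[OF refinement] disjoint_coverD(1)[OF Fq_cover] by blast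
  moreover have "new_part \<subseteq> Comp C (f j) ` V" unfolding new_part_def by blast
  ultimately show ?thesis
    unfolding extension_def using disjoint_coverD(1)[OF V_cover] finite_subset by blast
qed

lemma extension_memberD:
  assumes x: "x \<in> extension"
  shows "x \<in> hom C (Dom C x) B \<and> \<not> initial C (Dom C x) \<and>
    (\<exists>i \<in> insert j I'. \<exists>u. u \<in> hom C (Dom C x) (A i) \<and> x = Comp C (f i) u)"
proof (cases "x \<in> old_part")
  case True
  then obtain s c where sc: "x = Comp C s c" "s \<in> S" "c \<in> Fq s" "\<not> initial C (Dom C c)"
    unfolding old_part_def by blast
  obtain i u where iu: "i \<in> I'" "u \<in> hom C (Dom C s) (A i)" "s = Comp C (f i) u"
    using joint_refinementD(4)[OF refinement sc(2)] by blast
  have fi: "f i \<in> hom C (A i) B" using f_in_hom iu(1) I'_subset by blast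
  have c: "c \<in> hom C (Dom C c) (Dom C s)" using Fq_hom[OF sc(2,3)] .
  have x_hom: "x \<in> hom C (Dom C c) B" using comp_in_hom[OF c S_hom[OF sc(2)]] sc(1) by simp
  have "x = Comp C (f i) (Comp C u c)" using comp_assoc[OF c iu(2) fi] sc(1) iu(3) by simp
  then show ?thesis
    using x_hom in_homD(2)[OF x_hom] sc(4) iu(1) comp_in_hom[OF c iu(2)] by auto
next
  case False
  then obtain w where w: "x = Comp C (f j) w" "w \<in> V" "\<not> initial C (Dom C w)"
    using x unfolding extension_def new_part_def by blast
  have x_hom: "x \<in> hom C (Dom C w) B" using comp_in_hom[OF V_hom[OF w(2)] fj_hom] w(1) by simp
  then show ?thesis using in_homD(2)[OF x_hom] w V_hom[OF w(2)] by auto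
qed

lemma old_new_disjoint:
  assumes s: "s \<in> S" and c: "c \<in> Fq s" and w: "w \<in> V" and d: "disjoint C w (r s)"
  shows "disjoint C (Comp C s c) (Comp C (f j) w)"
proof -
  have c': "c \<in> hom C (Dom C c) (Dom C s)" and w': "w \<in> hom C (Dom C w) (A j)"
    using Fq_hom[OF s c] V_hom[OF w] .
  have sc: "Comp C s c \<in> hom C (Dom C c) B" and fw: "Comp C (f j) w \<in> hom C (Dom C w) B"
    using comp_in_hom[OF c' S_hom[OF s]] comp_in_hom[OF w' fj_hom] .
  show ?thesis
  proof (rule disjointI)
    fix X x y assume x: "x \<in> hom C X (Dom C (Comp C s c))" and y: "y \<in> hom C X (Dom C (Comp C (f j) w))"
      and eq: "Comp C (Comp C s c) x = Comp C (Comp C (f j) w) y"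
    have x': "x \<in> hom C X (Dom C c)" and y': "y \<in> hom C X (Dom C w)"
      using x y in_homD(2)[OF sc] in_homD(2)[OF fw] by simp_all
    have "Comp C s (Comp C c x) = Comp C (f j) (Comp C w y)"
      using eq comp_assoc[OF x' c' S_hom[OF s]] comp_assoc[OF y' w' fj_hom] by simp
    then obtain t where t: "t \<in> hom C X (Q s)" "Comp C (r s) t = Comp C w y"
      using is_pullback_lift[OF pullback[OF s] comp_in_hom[OF x' c']] comp_in_hom[OF y' w']
        in_homD(2)[OF fj_hom] by (metis (no_types))
    then show "initial C X"
      using disjoint_cone_initial[OF d y'] in_homD(2)[OF r_hom[OF s]] by simp
  qed (use in_homD[OF sc] in_homD[OF fw] in simp_all)
qed

lemma old_part_disjoint:
  assumes s: "s \<in> S" and c: "c \<in> Fq s" and s': "s' \<in> S" and c': "c' \<in> Fq s'"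
    and ne: "Comp C s c \<noteq> Comp C s' c'"
  shows "disjoint C (Comp C s c) (Comp C s' c')"
proof (cases "s = s'")
  case True
  then have "disjoint C c c'" using disjoint_coverD(4)[OF Fq_cover[OF s] c] c' ne by blast
  then show ?thesis
    using disjoint_comp_left True in_homD[OF Fq_hom[OF s c]] in_homD(1)[OF S_hom[OF s]] by blast
next
  case False
  then show ?thesis
    using disjoint_comp_right[OF joint_refinementD(5)[OF refinement s s' False]]
      Fq_hom[OF s c] Fq_hom[OF s' c'] by blast
qed

lemma extension_disjoint:
  assumes x: "x \<in> extension" and y: "y \<in> extension" and ne: "x \<noteq> y"
  shows "disjoint C x y"
proof -
  have old_new: "disjoint C x y \<and> disjoint C y x" if "x \<in> old_part" "y \<in> new_part" for x y
    using that old_new_disjoint disjoint_sym unfolding old_part_def new_part_def by blast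
  have new_new: "disjoint C x y" if xy: "x \<in> new_part" "y \<in> new_part" "x \<noteq> y" for x y
  proof -
    obtain w w' where "x = Comp C (f j) w" "y = Comp C (f j) w'" "w \<in> V" "w' \<in> V"
      using xy(1,2) unfolding new_part_def by blast
    moreover have "disjoint C w w'" using disjoint_coverD(4)[OF V_cover] calculation xy(3) by blast
    ultimately show ?thesis
      using disjoint_comp_left in_homD[OF V_hom] in_homD[OF fj_hom] by metis
  qed
  have "disjoint C x y" if "x \<in> old_part" "y \<in> old_part" "x \<noteq> y" for x y
    using that old_part_disjoint unfolding old_part_def by blast
  then show ?thesis using x y ne old_new new_new unfolding extension_def by blast
qed

lemma extension_covers_old_locally:
  assumes i: "i \<in> I'" and u: "u \<in> lifts i S"
  shows "pullback_sieve C u (gen_sieve C (lifts i extension)) \<in> J (Dom C u)"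
proof -
  let ?R = "gen_sieve C (lifts i extension)" and ?s = "Comp C (f i) u"
  have fi: "f i \<in> hom C (A i) B" using f_in_hom i I'_subset by blast
  have u_hom: "u \<in> hom C (Dom C u) (A i)" and s: "?s \<in> S" using u unfolding lifts_iff by blast+
  have dom_s: "Dom C ?s = Dom C u" using in_homD(2)[OF comp_in_hom[OF u_hom fi]] .
  have R: "sieve_on C (A i) ?R" by (rule gen_sieve_is_sieve) (simp add: lifts_iff)
  show ?thesis
  proof (rule covers_up_to_initial)
    show "Dom C u \<in> Ob C" using in_hom_obs(1)[OF u_hom] .
    show "gen_sieve C (Fq ?s) \<in> J (Dom C u)" using disjoint_coverD(3)[OF Fq_cover[OF s]] dom_s by simp
    show "sieve_on C (Dom C u) (pullback_sieve C u ?R)" using pullback_sieve_is_sieve[OF R u_hom] .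
  next
    fix h assume "h \<in> gen_sieve C (Fq ?s)"
    then obtain c y where cy: "h = Comp C c y" "c \<in> Fq ?s" "y \<in> hom C (Dom C y) (Dom C c)"
      by (rule gen_sieveE)
    have c: "c \<in> hom C (Dom C c) (Dom C u)" using Fq_hom[OF s cy(2)] dom_s by simp
    have h: "h \<in> hom C (Dom C y) (Dom C u)" using comp_in_hom[OF cy(3) c] cy(1) by simp
    show "h \<in> pullback_sieve C u ?R \<or> initial C (Dom C h)"
    proof (cases "initial C (Dom C c)")
      case True
      then show ?thesis using initial_if_hom_into_initial cy(3) in_homD(2)[OF h] by metis
    next
      case False
      then have "Comp C ?s c \<in> extension" using s cy(2) unfolding extension_def old_part_def by blast
      then have "Comp C u c \<in> lifts i extension"
        using comp_assoc[OF c u_hom fi] comp_in_hom[OF c u_hom] in_homD(2)[OF comp_in_hom[OF c u_hom]]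
        unfolding lifts_iff by simp
      then have "Comp C (Comp C u c) y \<in> ?R"
        using gen_sieveI cy(3) in_homD(2)[OF comp_in_hom[OF c u_hom]] by metis
      then show ?thesis
        using comp_assoc[OF cy(3) c u_hom] cy(1) in_homD[OF h] unfolding pullback_sieve_iff by simp
    qed
  qed
qed

lemma extension_covers_old:
  assumes i: "i \<in> I'" shows "gen_sieve C (lifts i extension) \<in> J (A i)"
proof -
  let ?R = "gen_sieve C (lifts i extension)"
  have Ai: "A i \<in> Ob C" using in_hom_obs(1) f_in_hom i I'_subset by blast
  have R: "sieve_on C (A i) ?R" by (rule gen_sieve_is_sieve) (simp add: lifts_iff)
  show ?thesis
  proof (rule covers_local[OF Ai joint_refinementD(6)[OF refinement i] R])
    fix h assume "h \<in> gen_sieve C (lifts i S)"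
    then obtain u x where ux: "h = Comp C u x" "u \<in> lifts i S" "x \<in> hom C (Dom C x) (Dom C u)"
      by (rule gen_sieveE)
    have u: "u \<in> hom C (Dom C u) (A i)" using ux(2) unfolding lifts_iff by blast
    have "pullback_sieve C x (pullback_sieve C u ?R) \<in> J (Dom C x)"
      using pullback_sieve_covers[OF in_hom_obs(1)[OF u] extension_covers_old_locally[OF i ux(2)] ux(3)] .
    then show "pullback_sieve C h ?R \<in> J (Dom C h)"
      using pullback_sieve_comp[OF u ux(3)] ux(1) in_homD(2)[OF comp_in_hom[OF ux(3) u]] by simp
  qed
qed

lemma pullback_projection_lifts:
  assumes s: "s \<in> S" and Q: "\<not> initial C (Q s)"
  shows "r s \<in> lifts j extension"
proof -
  have "Comp C s (q s) \<in> extension"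
    using s Q q_in_Fq in_homD(2)[OF q_hom] unfolding extension_def old_part_def by fastforce
  then show ?thesis
    using pullback_square[OF s] r_hom[OF s] in_homD(2)[OF r_hom[OF s]] unfolding lifts_iff by simp
qed

lemma extension_covers_new: "gen_sieve C (lifts j extension) \<in> J (A j)"
proof -
  let ?R = "gen_sieve C (lifts j extension)"
  have R: "sieve_on C (A j) ?R" by (rule gen_sieve_is_sieve) (simp add: lifts_iff)
  show ?thesis
  proof (rule covers_up_to_initial[OF in_hom_obs(1)[OF fj_hom] disjoint_coverD(3)[OF V_cover] R])
    fix h assume "h \<in> gen_sieve C V"
    then obtain w x where wx: "h = Comp C w x" "w \<in> V" "x \<in> hom C (Dom C x) (Dom C w)"
      by (rule gen_sieveE)
    have dom_h: "Dom C h = Dom C x" using in_homD(2)[OF comp_in_hom[OF wx(3) V_hom[OF wx(2)]]] wx(1) by simp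
    consider (inside) s y where "s \<in> S" "y \<in> hom C (Dom C w) (Dom C (r s))" "w = Comp C (r s) y"
      | (outside) "\<forall>s \<in> S. disjoint C w (r s)"
      using V_dichotomy[OF wx(2)] by blast
    then show "h \<in> ?R \<or> initial C (Dom C h)"
    proof cases
      case inside
      have yx: "Comp C y x \<in> hom C (Dom C x) (Q s)"
        using comp_in_hom[OF wx(3) inside(2)] in_homD(2)[OF r_hom[OF inside(1)]] by simp
      have h: "h = Comp C (r s) (Comp C y x)"
        using comp_assoc[OF wx(3) inside(2) in_homI] in_homD(1)[OF r_hom[OF inside(1)]] wx(1) inside(3)
        by simp
      show ?thesis
      proof (cases "initial C (Q s)")
        case True
        then show ?thesis using initial_if_hom_into_initial[OF True yx] dom_h by simp
      next
        case False
        then have "r s \<in> lifts j extension" by (rule pullback_projection_lifts[OF inside(1)])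
        then show ?thesis using gen_sieveI yx in_homD(2)[OF r_hom[OF inside(1)]] h by metis
      qed
    next
      case outside
      show ?thesis
      proof (cases "initial C (Dom C w)")
        case True
        then show ?thesis using initial_if_hom_into_initial[OF True wx(3)] dom_h by simp
      next
        case False
        then have "Comp C (f j) w \<in> extension"
          using wx(2) outside unfolding extension_def new_part_def by blast
        then have "w \<in> lifts j extension" using V_hom[OF wx(2)] unfolding lifts_iff by blast
        then show ?thesis using gen_sieveI[OF _ wx(3)] wx(1) by blast
      qed
    qed
  qed
qed

lemma joint_refinement_extension: "joint_refinement (insert j I') extension"
  unfolding joint_refinement_def
  using finite_extension extension_memberD extension_disjoint extension_covers_old extension_covers_new
  by blast

end

context morphism_family
begin

lemma joint_refinement_insert:
  assumes D: "is_sieve C D" and complements: "\<forall>X \<in> D. has_complements_for C J X"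
    and overlaps: "\<forall>i \<in> I. \<forall>i' \<in> I. i \<noteq> i' \<longrightarrow> (\<exists>P p q. is_pullback C (f i) (f i') P p q \<and> P \<in> D)"
    and S: "joint_refinement I' S" and I': "I' \<subseteq> I" and j: "j \<in> I" "j \<notin> I'"
  shows "\<exists>S'. joint_refinement (insert j I') S'"
proof -
  have fj: "f j \<in> hom C (A j) B" using f_in_hom[OF j(1)] .
  obtain Q q r where pb: "\<And>s. s \<in> S \<Longrightarrow> is_pullback C s (f j) (Q s) (q s) (r s)"
    using pullback_choice[OF _ in_homD(1)[OF fj]] joint_refinementD(2)[OF S] in_homD(3)[OF fj] by metis
  have Q_D: "Q s \<in> D" if s: "s \<in> S" for s
  proof -
    obtain i u where iu: "i \<in> I'" "u \<in> hom C (Dom C s) (A i)" "s = Comp C (f i) u"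
      using joint_refinementD(4)[OF S s] by blast
    have i: "i \<in> I" "i \<noteq> j" using iu(1) I' j by blast+
    then obtain P p p' where P: "is_pullback C (f i) (f j) P p p'" "P \<in> D"
      using overlaps j(1) by blast
    have "u \<in> hom C (Dom C s) (Dom C (f i))" using iu(2) in_homD(2)[OF f_in_hom[OF i(1)]] by simp
    then show ?thesis using pullback_comp_in_sieve[OF D P] pb[OF s] iu(3) by blast
  qed
  have "\<exists>F. disjoint_cover C J (Dom C s) F \<and> q s \<in> F" if "s \<in> S" for s
    using complement_cover[OF _ is_pullbackD(1)[OF pb[OF that]]] complements Q_D[OF that] by blast
  then have ex_Fq: "\<forall>s \<in> S. \<exists>F. disjoint_cover C J (Dom C s) F \<and> q s \<in> F" by blast
  obtain Fq where Fq: "\<forall>s \<in> S. disjoint_cover C J (Dom C s) (Fq s) \<and> q s \<in> Fq s"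
    using bchoice[OF ex_Fq] by blast
  have "\<exists>F. disjoint_cover C J (A j) F \<and> r s \<in> F" if "s \<in> S" for s
    using complement_cover[OF _ is_pullbackD(2)[OF pb[OF that]]] complements Q_D[OF that]
      in_homD(2)[OF fj] by auto
  then have ex_Fr: "\<forall>s \<in> S. \<exists>F. disjoint_cover C J (A j) F \<and> r s \<in> F" by blast
  obtain Fr where "\<forall>s \<in> S. disjoint_cover C J (A j) (Fr s) \<and> r s \<in> Fr s"
    using bchoice[OF ex_Fr] by blast
  then have "\<And>s. s \<in> S \<Longrightarrow> disjoint_cover C J (A j) (Fr s)" "\<And>s. s \<in> S \<Longrightarrow> r s \<in> Fr s"
    by blast+
  then obtain V where V: "disjoint_cover C J (A j) V"
    "\<And>w. w \<in> V \<Longrightarrow> (\<exists>s \<in> S. \<exists>y. y \<in> hom C (Dom C w) (Dom C (r s)) \<and> w = Comp C (r s) y) \<or>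
      (\<forall>s \<in> S. disjoint C w (r s))"
    using cover_factoring_or_disjoint[OF in_hom_obs(1)[OF fj] joint_refinementD(1)[OF S]] by metis
  interpret refinement_extension C J I A f B I' S j Q q r Fq V
    by unfold_locales (use S I' j(1) pb Fq V in auto)
  show ?thesis using joint_refinement_extension by blast
qed

lemma joint_refinement_exists:
  assumes I: "finite I" and D: "is_sieve C D" and complements: "\<forall>X \<in> D. has_complements_for C J X"
    and overlaps: "\<forall>i \<in> I. \<forall>i' \<in> I. i \<noteq> i' \<longrightarrow> (\<exists>P p q. is_pullback C (f i) (f i') P p q \<and> P \<in> D)"
  shows "\<exists>S. joint_refinement I S"
  using I subset_refl
proof (induction I rule: finite_subset_induct')
  case empty
  then show ?case using joint_refinement_empty by blast
next
  case (insert j I')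
  then show ?case using joint_refinement_insert[OF D complements overlaps] by blast
qed

lemma W_hom_of_joint_refinement:
  assumes S: "joint_refinement I S" and A: "W_obj C I A"
    and e: "bij_betw e K (SIGMA i:I. lifts i S)" and K: "finite K"
  shows "W_hom C J K (\<lambda>k. Dom C (snd (e k))) I A (\<lambda>k. fst (e k)) (\<lambda>k. snd (e k))"
proof -
  have e_k: "fst (e k) \<in> I" "snd (e k) \<in> lifts (fst (e k)) S" if "k \<in> K" for k
    using bij_betwE[OF e] that by (auto simp: mem_Sigma_iff[symmetric])
  have Z: "Dom C (snd (e k)) \<in> Ob C \<and> \<not> initial C (Dom C (snd (e k)))" if k: "k \<in> K" for k
  proof -
    have u: "snd (e k) \<in> hom C (Dom C (snd (e k))) (A (fst (e k)))"
      and s: "Comp C (f (fst (e k))) (snd (e k)) \<in> S"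
      using e_k[OF k] unfolding lifts_iff by blast+
    have "Dom C (Comp C (f (fst (e k))) (snd (e k))) = Dom C (snd (e k))"
      using in_homD(2)[OF comp_in_hom[OF u f_in_hom[OF e_k(1)[OF k]]]] .
    then show ?thesis using joint_refinementD(3)[OF S s] in_hom_obs(1)[OF u] by simp
  qed
  have "fdcf C J (A i) {k \<in> K. fst (e k) = i} (\<lambda>k. snd (e k))" if i: "i \<in> I" for i
  proof (rule fdcf_if_disjoint_cover)
    note fibre = bij_betw_Sigma_fibre[OF e i]
    show "disjoint_cover C J (A i) ((\<lambda>k. snd (e k)) ` {k \<in> K. fst (e k) = i})"
      using lifts_disjoint_cover[OF S i subset_refl] bij_betw_imp_surj_on[OF fibre] by simp
    show "inj_on (\<lambda>k. snd (e k)) {k \<in> K. fst (e k) = i}" using bij_betw_imp_inj_on[OF fibre] .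
  qed (use K in simp)
  moreover have "W_obj C K (\<lambda>k. Dom C (snd (e k)))" unfolding W_obj_def using K Z by blast
  moreover have "\<forall>k \<in> K. fst (e k) \<in> I \<and> snd (e k) \<in> hom C (Dom C (snd (e k))) (A (fst (e k)))"
    using e_k unfolding lifts_iff by blast
  ultimately show ?thesis unfolding W_hom_def using A by blast
qed

lemma joint_refinement_equal_or_disjoint:
  assumes S: "joint_refinement I S" and e: "inj_on e K" "e ` K \<subseteq> (SIGMA i:I. lifts i S)"
    and k: "k \<in> K" "k' \<in> K" "k \<noteq> k'"
  defines "g \<equiv> \<lambda>k. fst (e k)" and "gm \<equiv> \<lambda>k. snd (e k)"
  shows "(Comp C (f (g k)) (gm k) = Comp C (f (g k')) (gm k') \<or>
      disjoint C (Comp C (f (g k)) (gm k)) (Comp C (f (g k')) (gm k'))) \<and>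
    (Comp C (f (g k)) (gm k) = Comp C (f (g k')) (gm k') \<longrightarrow> g k \<noteq> g k')"
proof -
  have lift: "g l \<in> I" "gm l \<in> lifts (g l) S" if "l \<in> K" for l
    using e(2) that unfolding g_def gm_def by auto
  have "Comp C (f (g l)) (gm l) \<in> S" if "l \<in> K" for l using lift[OF that] unfolding lifts_iff by blast
  then have "Comp C (f (g k)) (gm k) = Comp C (f (g k')) (gm k') \<or>
      disjoint C (Comp C (f (g k)) (gm k)) (Comp C (f (g k')) (gm k'))"
    using joint_refinementD(5)[OF S] k by blast
  moreover have "g k \<noteq> g k'" if "Comp C (f (g k)) (gm k) = Comp C (f (g k')) (gm k')"
  proof
    assume "g k = g k'"
    then have "gm k = gm k'" using lifts_inj lift k that by metis
    then show False using \<open>g k = g k'\<close> inj_onD[OF e(1) _ k(1,2)] k(3) unfolding g_def gm_def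
      by (simp add: prod_eq_iff)
  qed
  ultimately show ?thesis by blast
qed

end

theorem lemma5p12:
  fixes C :: "('o, 'm) cat" and J JD :: "'o \<Rightarrow> 'm set set" and D :: "'o set"
    and I :: "'i set" and A :: "'i \<Rightarrow> 'o" and f :: "'i \<Rightarrow> 'm" and B :: 'o
  assumes "closed_assembler C J"
    and "subassembler C J D JD"
    and "is_sieve C D"
    and "\<forall>X \<in> D. has_complements_for C J X"
    and "W_obj C I A"
    and "\<forall>i \<in> I. f i \<in> hom C (A i) B"
    and "\<forall>i \<in> I. \<forall>i' \<in> I. i \<noteq> i' \<longrightarrow>
           (\<exists>P p q. is_pullback C (f i) (f i') P p q \<and> P \<in> D)"
  shows "\<exists>(K :: nat set) Z g gm. W_hom C J K Z I A g gm \<and>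
           (\<forall>k \<in> K. \<forall>k' \<in> K. k \<noteq> k' \<longrightarrow>
              (Comp C (f (g k)) (gm k) = Comp C (f (g k')) (gm k') \<or>
               disjoint C (Comp C (f (g k)) (gm k)) (Comp C (f (g k')) (gm k'))) \<and>
              (Comp C (f (g k)) (gm k) = Comp C (f (g k')) (gm k') \<longrightarrow> g k \<noteq> g k'))"
proof -
  interpret morphism_family C J I A f B
    by unfold_locales (use assms(1,6) in simp_all)
  have I: "finite I" using assms(5) unfolding W_obj_def by blast
  obtain S where S: "joint_refinement I S" using joint_refinement_exists[OF I assms(3,4,7)] by blast
  let ?T = "SIGMA i:I. lifts i S"
  have "finite ?T"
    by (rule finite_SigmaI[OF I disjoint_coverD(1)[OF lifts_disjoint_cover[OF S _ subset_refl]]])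
  then obtain e where e: "bij_betw e {0..<card ?T} ?T" using ex_bij_betw_nat_finite by blast
  have "W_hom C J {0..<card ?T} (\<lambda>k. Dom C (snd (e k))) I A (\<lambda>k. fst (e k)) (\<lambda>k. snd (e k))"
    using W_hom_of_joint_refinement[OF S assms(5) e] by simp
  moreover note joint_refinement_equal_or_disjoint[OF S bij_betw_imp_inj_on[OF e]
      equalityD1[OF bij_betw_imp_surj_on[OF e]]]
  ultimately show ?thesis by blast
qed

end
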